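(* Let $f:2^{\mathcal N}\to\mathbb R_{\ge0}$ be non-negative submodular and $\mathcal M=(\mathcal N,\mathcal I)$ a matroid of rank $k$, padded with dummy elements as described in the context. Consider the Smooth Residual Random Greedy algorithm (general matroid) with parameter $T$: $S_0=\emptyset$; for $i=1,\dots,T$, let $M_i$ be a base of $\mathcal M/S_{i-1}$ maximizing $\sum_{u\in M_i}[f(S_{i-1}\cup\{u\})-f(S_{i-1})]$; with probability $1-|S_{i-1}|/k$ let $u_i$ be a uniformly random element of $M_i$ and set $S_i=S_{i-1}\cup\{u_i\}$; otherwise set $S_i=S_{i-1}$. Then for every $i=1,\dots,T$, $$\mathbb E[f(S_i)]-\mathbb E[f(S_{i-1})]\ge\frac1k\,\mathbb E\big[f(O_{S_{i-1}}\cup S_{i-1})-f(S_{i-1})\big].$$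
   Context: A set function $f$ is submodular if $f(A\cup B)+f(A\cap B)\le f(A)+f(B)$ for all $A,B\subseteq\mathcal N$. For $S\in\mathcal I$, the contracted matroid $\mathcal M/S$ has ground set $\mathcal N\setminus S$, with $S'\subseteq\mathcal N\setminus S$ independent iff $S'\cup S\in\mathcal I$. Padding assumption: the ground set contains zero-contribution dummy elements (e.g., a parallel copy $u'$ of every original element $u$, a set being independent iff it contains at most one of $u,u'$ for each $u$ and its projection onto the original elements is independent, and $f$ depending only on the original elements of a set), so that for every $S\in\mathcal I$ one may fix $O_S$ to be a set $A$ maximizing $f(S\cup A)$ over independent sets $A$ of $\mathcal M/S$ which is moreover a base of $\mathcal M/S$ (so $S\cup O_S$ is a base of $\mathcal M$ and $|O_S|=k-|S|$). *)

theory Defs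
  imports "HOL-Probability.Probability_Mass_Function"
begin

definition matroid :: "'a set \<Rightarrow> 'a set set \<Rightarrow> bool" where
  "matroid N Ind \<longleftrightarrow> finite N \<and> (\<forall>A\<in>Ind. A \<subseteq> N) \<and> {} \<in> Ind \<and>
     (\<forall>A B. A \<in> Ind \<and> B \<subseteq> A \<longrightarrow> B \<in> Ind) \<and>
     (\<forall>A B. A \<in> Ind \<and> B \<in> Ind \<and> card A < card B \<longrightarrow> (\<exists>x\<in>B - A. insert x A \<in> Ind))"

definition matroid_rank :: "'a set set \<Rightarrow> nat" where
  "matroid_rank Ind = Max (card ` Ind)"

definition is_base :: "'a set \<Rightarrow> 'a set set \<Rightarrow> 'a set \<Rightarrow> bool" where
  "is_base N Ind B \<longleftrightarrow> B \<in> Ind \<and> (\<forall>x\<in>N - B. insert x B \<notin> Ind)"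

definition contract_ground :: "'a set \<Rightarrow> 'a set \<Rightarrow> 'a set" where
  "contract_ground N S = N - S"

definition contract_indep :: "'a set \<Rightarrow> 'a set set \<Rightarrow> 'a set \<Rightarrow> 'a set set" where
  "contract_indep N Ind S = {A. A \<subseteq> N - S \<and> A \<union> S \<in> Ind}"

definition submodular_on :: "'a set \<Rightarrow> ('a set \<Rightarrow> real) \<Rightarrow> bool" where
  "submodular_on N f \<longleftrightarrow>
     (\<forall>A B. A \<subseteq> N \<and> B \<subseteq> N \<longrightarrow> f (A \<union> B) + f (A \<inter> B) \<le> f A + f B)"

definition srrg_step :: "nat \<Rightarrow> ('a set \<Rightarrow> 'a set) \<Rightarrow> 'a set \<Rightarrow> 'a set pmf" where
  "srrg_step k Mc S =
     bind_pmf (bernoulli_pmf (1 - real (card S) / real k))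
       (\<lambda>b. if b then map_pmf (\<lambda>u. insert u S) (pmf_of_set (Mc S)) else return_pmf S)"

fun srrg_dist :: "nat \<Rightarrow> ('a set \<Rightarrow> 'a set) \<Rightarrow> nat \<Rightarrow> 'a set pmf" where
  "srrg_dist k Mc 0 = return_pmf {}"
| "srrg_dist k Mc (Suc i) = bind_pmf (srrg_dist k Mc i) (srrg_step k Mc)"

end

theory Submission
  imports Defs
begin

text \<open>
  Fix S = S(i-1) and let M = Mc S be the greedy base of M/S, so |M| = k - |S|. The step adds a
  uniformly random element of M with probability |M|/k, hence its expected gain is exactly
  1/k times the sum of the marginals f(S + u) - f S over u in M. Since Opt S is another base
  of M/S, the greedy choice of M makes this sum at least the sum of the marginals over Opt S,
  which by submodularity dominates f(S \<union> Opt S) - f S. Averaging over S(i-1) gives the claim.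
\<close>

lemma submodular_on_gain_le_sum_marginals:
  assumes submod: "submodular_on N f" and "S \<subseteq> N"
    and "finite B" "B \<subseteq> N" "B \<inter> S = {}"
  shows "f (S \<union> B) - f S \<le> (\<Sum>u\<in>B. f (insert u S) - f S)"
  using \<open>finite B\<close> \<open>B \<subseteq> N\<close> \<open>B \<inter> S = {}\<close>
proof (induction B rule: finite_induct)
  case empty
  then show ?case by simp
next
  case (insert x B)
  have "insert x S \<subseteq> N" "S \<union> B \<subseteq> N" using insert.prems \<open>S \<subseteq> N\<close> by auto
  then have "f (insert x S \<union> (S \<union> B)) + f (insert x S \<inter> (S \<union> B))
               \<le> f (insert x S) + f (S \<union> B)"
    using submod unfolding submodular_on_def by blast
  moreover have "insert x S \<union> (S \<union> B) = S \<union> insert x B" by auto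
  moreover have "insert x S \<inter> (S \<union> B) = S" using insert.hyps insert.prems by auto
  ultimately have "f (S \<union> insert x B) - f (S \<union> B) \<le> f (insert x S) - f S" by simp
  moreover have "f (S \<union> B) - f S \<le> (\<Sum>u\<in>B. f (insert u S) - f S)"
    using insert by simp
  ultimately show ?case using insert.hyps by simp
qed

lemma matroid_indep_subset_ground:
  "matroid N Ind \<Longrightarrow> A \<in> Ind \<Longrightarrow> A \<subseteq> N"
  unfolding matroid_def by blast

lemma matroid_finite_indep:
  assumes "matroid N Ind"
  shows "finite Ind"
proof (rule finite_subset)
  show "Ind \<subseteq> Pow N" using matroid_indep_subset_ground[OF assms] by blast
  show "finite (Pow N)" using assms unfolding matroid_def by simp
qed

lemma matroid_indep_finite:
  assumes "matroid N Ind" "A \<in> Ind"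
  shows "finite A"
proof (rule finite_subset)
  show "A \<subseteq> N" using matroid_indep_subset_ground[OF assms] .
  show "finite N" using assms(1) unfolding matroid_def by simp
qed

lemma matroid_indep_downward_closed:
  assumes "matroid N Ind" "A \<in> Ind" "B \<subseteq> A"
  shows "B \<in> Ind"
  using assms unfolding matroid_def by metis

lemma matroid_augment:
  assumes "matroid N Ind" "A \<in> Ind" "B \<in> Ind" "card A < card B"
  obtains x where "x \<in> B - A" "insert x A \<in> Ind"
  using assms unfolding matroid_def by metis

lemma matroid_card_indep_le_rank:
  assumes "matroid N Ind" "A \<in> Ind"
  shows "card A \<le> matroid_rank Ind"
  unfolding matroid_rank_def using matroid_finite_indep[OF assms(1)] assms(2) by simp

lemma matroid_rank_attained:
  assumes "matroid N Ind"
  obtains X where "X \<in> Ind" "card X = matroid_rank Ind"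
proof -
  have "{} \<in> Ind" using assms unfolding matroid_def by simp
  then have "Ind \<noteq> {}" by blast
  then have "matroid_rank Ind \<in> card ` Ind"
    unfolding matroid_rank_def using matroid_finite_indep[OF assms] by simp
  then show ?thesis using that by (metis imageE)
qed

lemma contract_base_union_indep:
  assumes "is_base (contract_ground N S) (contract_indep N Ind S) B"
  shows "B \<subseteq> N - S" "B \<union> S \<in> Ind"
  using assms unfolding is_base_def contract_indep_def by auto

lemma contract_base_card:
  assumes matroid: "matroid N Ind" and "S \<in> Ind"
    and base: "is_base (contract_ground N S) (contract_indep N Ind S) B"
  shows "finite B" "card B + card S = matroid_rank Ind"
proof -
  note BS = contract_base_union_indep[OF base]
  show "finite B"
    using matroid_indep_finite[OF matroid BS(2)] by simp
  moreover have "finite S"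
    using matroid_indep_finite[OF matroid \<open>S \<in> Ind\<close>] .
  ultimately have card_BS: "card (B \<union> S) = card B + card S"
    using BS by (intro card_Un_disjoint) auto
  obtain X where X: "X \<in> Ind" "card X = matroid_rank Ind"
    using matroid_rank_attained[OF matroid] .
  have "\<not> card (B \<union> S) < matroid_rank Ind"
  proof
    assume "card (B \<union> S) < matroid_rank Ind"
    then obtain x where x: "x \<in> X - (B \<union> S)" "insert x (B \<union> S) \<in> Ind"
      using matroid_augment[OF matroid BS(2) X(1)] X(2) by metis
    have "x \<in> contract_ground N S - B"
      using x matroid_indep_subset_ground[OF matroid X(1)] unfolding contract_ground_def by blast
    moreover have "insert x B \<in> contract_indep N Ind S"
      using x \<open>x \<in> contract_ground N S - B\<close> BS
      unfolding contract_indep_def contract_ground_def by (simp add: insert_subset)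
    ultimately show False
      using base unfolding is_base_def by blast
  qed
  then show "card B + card S = matroid_rank Ind"
    using matroid_card_indep_le_rank[OF matroid BS(2)] card_BS by simp
qed

lemma bernoulli_pmf_0: "bernoulli_pmf 0 = return_pmf False"
  by (rule pmf_eqI) (simp split: split_indicator)

lemma expectation_bind_bernoulli_pmf:
  fixes f :: "'a \<Rightarrow> real"
  assumes "0 \<le> p" "p \<le> 1" "\<And>b. finite (set_pmf (q b))"
  shows "measure_pmf.expectation (bind_pmf (bernoulli_pmf p) q) f
           = p * measure_pmf.expectation (q True) f + (1 - p) * measure_pmf.expectation (q False) f"
  using assms by (subst pmf_expectation_bind[where A = UNIV]) (auto simp: UNIV_bool)

lemma srrg_step_saturated:
  assumes "Mc S = {}" "card S = k" "k > 0"
  shows "srrg_step k Mc S = return_pmf S"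
  using assms unfolding srrg_step_def by (simp add: bernoulli_pmf_0 bind_return_pmf)

lemma srrg_step_expectation:
  fixes f :: "'a set \<Rightarrow> real"
  assumes "finite (Mc S)" "card (Mc S) + card S = k" "k > 0"
  shows "measure_pmf.expectation (srrg_step k Mc S) f
           = f S + (\<Sum>u\<in>Mc S. f (insert u S) - f S) / real k"
proof (cases "Mc S = {}")
  case True
  then show ?thesis using assms by (simp add: srrg_step_saturated)
next
  case False
  define m where "m = real (card (Mc S))"
  have "m > 0" using False assms(1) unfolding m_def by (simp add: card_gt_0_iff)
  have "real k = m + real (card S)" using assms(2) unfolding m_def by simp
  then have p: "1 - real (card S) / real k = m / real k" "0 \<le> m / real k" "m / real k \<le> 1"
    using \<open>m > 0\<close> \<open>k > 0\<close> by (auto simp: field_simps)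
  have "measure_pmf.expectation (srrg_step k Mc S) f
          = m / real k * ((\<Sum>u\<in>Mc S. f (insert u S)) / m) + (1 - m / real k) * f S"
    unfolding srrg_step_def p(1) using False assms(1)
    by (subst expectation_bind_bernoulli_pmf[OF p(2,3)])
       (auto simp: integral_pmf_of_set m_def)
  also have "\<dots> = f S + ((\<Sum>u\<in>Mc S. f (insert u S)) - m * f S) / real k"
    using \<open>m > 0\<close> \<open>k > 0\<close> by (simp add: field_simps)
  finally show ?thesis by (simp add: sum_subtractf m_def)
qed

lemma srrg_step_support:
  assumes matroid: "matroid N Ind" and "S \<in> Ind" and "k = matroid_rank Ind" "k > 0"
    and base: "is_base (contract_ground N S) (contract_indep N Ind S) (Mc S)"
  shows "set_pmf (srrg_step k Mc S) \<subseteq> Ind"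
proof (cases "Mc S = {}")
  case True
  then show ?thesis
    using assms contract_base_card[OF matroid \<open>S \<in> Ind\<close> base] by (simp add: srrg_step_saturated)
next
  case False
  have "insert u S \<in> Ind" if "u \<in> Mc S" for u
  proof -
    have "insert u S \<subseteq> Mc S \<union> S" using that by auto
    then show ?thesis
      by (rule matroid_indep_downward_closed[OF matroid contract_base_union_indep(2)[OF base]])
  qed
  then show ?thesis
    using False \<open>S \<in> Ind\<close> contract_base_card(1)[OF matroid \<open>S \<in> Ind\<close> base]
    unfolding srrg_step_def by (auto simp: set_pmf_of_set[OF False] split: if_splits)
qed

lemma srrg_dist_support:
  assumes matroid: "matroid N Ind" and "k = matroid_rank Ind" "k > 0"
    and "\<forall>S\<in>Ind. is_base (contract_ground N S) (contract_indep N Ind S) (Mc S)"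
  shows "set_pmf (srrg_dist k Mc n) \<subseteq> Ind"
proof (induction n)
  case 0
  have "{} \<in> Ind" using matroid unfolding matroid_def by simp
  then show ?case by simp
next
  case (Suc n)
  then show ?case using srrg_step_support[OF matroid _ assms(2,3)] assms(4) by fastforce
qed

lemma srrg_step_expected_gain_ge:
  fixes f :: "'a set \<Rightarrow> real"
  assumes matroid: "matroid N Ind" and S: "S \<in> Ind"
    and k: "k = matroid_rank Ind" "k > 0"
    and submod: "submodular_on N f"
    and B_base: "is_base (contract_ground N S) (contract_indep N Ind S) B"
    and M_base: "is_base (contract_ground N S) (contract_indep N Ind S) (Mc S)"
    and M_greedy: "(\<Sum>u\<in>B. f (insert u S) - f S) \<le> (\<Sum>u\<in>Mc S. f (insert u S) - f S)"
  shows "1 / real k * (f (B \<union> S) - f S) \<le> measure_pmf.expectation (srrg_step k Mc S) f - f S"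
proof -
  have "S \<subseteq> N" using matroid_indep_subset_ground[OF matroid S] .
  moreover note contract_base_card(1)[OF matroid S B_base] contract_base_union_indep(1)[OF B_base]
  ultimately have "f (B \<union> S) - f S \<le> (\<Sum>u\<in>B. f (insert u S) - f S)"
    using submodular_on_gain_le_sum_marginals[OF submod, of S B] by (auto simp: Un_commute)
  also note M_greedy
  finally show ?thesis
    using k contract_base_card[OF matroid S M_base]
    by (simp add: srrg_step_expectation divide_right_mono)
qed

lemma expectation_bind_increment_ge:
  fixes f g :: "'a \<Rightarrow> real"
  assumes "finite (set_pmf p)" "\<And>x. x \<in> set_pmf p \<Longrightarrow> finite (set_pmf (q x))"
    and "\<And>x. x \<in> set_pmf p \<Longrightarrow> g x \<le> measure_pmf.expectation (q x) f - f x"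
  shows "measure_pmf.expectation p g
           \<le> measure_pmf.expectation (bind_pmf p q) f - measure_pmf.expectation p f"
proof -
  have expectation_sum: "measure_pmf.expectation p h = (\<Sum>x\<in>set_pmf p. pmf p x * h x)"
    for h :: "'a \<Rightarrow> real"
    using assms(1) by (subst integral_measure_pmf[where A = "set_pmf p"]) auto
  have "measure_pmf.expectation p g
          \<le> (\<Sum>x\<in>set_pmf p. pmf p x * (measure_pmf.expectation (q x) f - f x))"
    unfolding expectation_sum using assms(3) by (intro sum_mono mult_left_mono) auto
  also have "\<dots> = (\<Sum>x\<in>set_pmf p. pmf p x * measure_pmf.expectation (q x) f)
                     - measure_pmf.expectation p f"
    unfolding expectation_sum by (simp add: right_diff_distrib sum_subtractf)
  also have "\<dots> = measure_pmf.expectation (bind_pmf p q) f - measure_pmf.expectation p f"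
    using assms(1,2) by (subst pmf_expectation_bind[where A = "set_pmf p"]) auto
  finally show ?thesis .
qed

theorem lemma12:
  fixes N :: "'a set" and Ind :: "'a set set" and f :: "'a set \<Rightarrow> real"
    and k T i :: nat and Mc Opt :: "'a set \<Rightarrow> 'a set"
  assumes matroid: "matroid N Ind"
    and rank: "k = matroid_rank Ind" and kpos: "k > 0"
    and nonneg: "\<forall>A. A \<subseteq> N \<longrightarrow> f A \<ge> 0"
    and submod: "submodular_on N f"
    and Opt_opt: "\<forall>S\<in>Ind. is_base (contract_ground N S) (contract_indep N Ind S) (Opt S) \<and>
                  (\<forall>A\<in>contract_indep N Ind S. f (S \<union> A) \<le> f (S \<union> Opt S))"
    and Mc_opt: "\<forall>S\<in>Ind. is_base (contract_ground N S) (contract_indep N Ind S) (Mc S) \<and>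
                  (\<forall>B. is_base (contract_ground N S) (contract_indep N Ind S) B \<longrightarrow>
                     (\<Sum>u\<in>B. f (insert u S) - f S) \<le> (\<Sum>u\<in>Mc S. f (insert u S) - f S))"
    and i: "1 \<le> i" "i \<le> T"
  shows "measure_pmf.expectation (srrg_dist k Mc i) f
           - measure_pmf.expectation (srrg_dist k Mc (i - 1)) f
         \<ge> 1 / real k * measure_pmf.expectation (srrg_dist k Mc (i - 1))
                          (\<lambda>S. f (Opt S \<union> S) - f S)"
proof -
  have Opt_base: "\<And>S. S \<in> Ind \<Longrightarrow> is_base (contract_ground N S) (contract_indep N Ind S) (Opt S)"
    using Opt_opt by blast
  have Mc_base: "\<And>S. S \<in> Ind \<Longrightarrow> is_base (contract_ground N S) (contract_indep N Ind S) (Mc S)"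
    using Mc_opt by blast
  define p where "p = srrg_dist k Mc (i - 1)"
  have step: "srrg_dist k Mc i = bind_pmf p (srrg_step k Mc)"
    unfolding p_def using i by (cases i) auto
  have support: "set_pmf p \<subseteq> Ind"
    unfolding p_def using srrg_dist_support[OF matroid rank kpos] Mc_base by blast
  have "measure_pmf.expectation p (\<lambda>S. 1 / real k * (f (Opt S \<union> S) - f S))
          \<le> measure_pmf.expectation (srrg_dist k Mc i) f - measure_pmf.expectation p f"
    unfolding step
  proof (rule expectation_bind_increment_ge)
    show "finite (set_pmf p)"
      using support matroid_finite_indep[OF matroid] by (rule finite_subset)
    fix S assume "S \<in> set_pmf p"
    then have S: "S \<in> Ind" using support by blast
    show "finite (set_pmf (srrg_step k Mc S))"
      using srrg_step_support[where Mc = Mc, OF matroid S rank kpos Mc_base[OF S]]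
        matroid_finite_indep[OF matroid]
      by (rule finite_subset)
    show "1 / real k * (f (Opt S \<union> S) - f S) \<le> measure_pmf.expectation (srrg_step k Mc S) f - f S"
      using Mc_opt S Opt_base[OF S]
      by (intro srrg_step_expected_gain_ge[where Mc = Mc, OF matroid S rank kpos submod
            Opt_base[OF S] Mc_base[OF S]]) blast
  qed
  then show ?thesis unfolding p_def by simp
qed

end
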